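(* Let $(Y,\le)$ be a dcpo and let $X\subset Y$ be a dense lower subset of $Y$ which truncates $Y$. Then $Y$, together with the inclusion $X\hookrightarrow Y$, is the directed completion of $X$ (with the induced order). If moreover every two elements of $X$ have a supremum in $X$, the conclusion still holds under the weaker assumption that $X$ directly truncates $Y$.
   Context: Let $(Y,\le)$ be a partially ordered set. A subset $D\subset Y$ is directed if every finite subset of $D$ (including the empty one) has an upper bound in $D$. $A\subset Y$ is a lower set if $x\in A$ and $y\le x$ imply $y\in A$; $\downarrow A:=\{x:x\le a\text{ for some }a\in A\}$, $\downarrow a:=\downarrow\{a\}$. $(Y,\le)$ is a dcpo if every directed subset has a supremum. A subset $A$ is directed-sup-closed if the supremum of every directed $D\subset A$ which has a supremum belongs to $A$. $\overline A$ is the smallest directed-sup-closed set containing $A$, $\widehat A$ the smallest set containing $A$ that is both a lower set and directed-sup-closed; $A$ is dense if $\overline A=Y$; $A$ has a tip if $\overline A$ has a maximum, denoted ${\sf tip}\,A$. An element $a\in Y$ truncates $Y$ if for every $B\subset Y$ having a tip with $a\le{\sf tip}\,B$ we have $a\in\widehat{(\downarrow B)\cap(\downarrow a)}$; it directly truncates $Y$ if this holds for every directed $B\subset Y$ having a supremum with $a\le\sup B$. A subset $X\subset Y$ (directly) truncates $Y$ if every $a\in X$ does. A map between partially ordered sets has the Monotone Convergence Property (Mcp) if it maps every directed set having a supremum to a set having a supremum, with $T(\sup D)=\sup T(D)$. A directed completion of $(X,\le)$ is a dcpo $(\overline X,\bar\le)$ with a map $\iota:X\to\overline X$ with the Mcp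 such that for every dcpo $Z$ and every map $T:X\to Z$ with the Mcp there is a unique map $\bar T:\overline X\to Z$ with the Mcp satisfying $\bar T\circ\iota=T$. *)

theory Defs
  imports Main
begin

definition directed_in :: "'a::order set \<Rightarrow> 'a set \<Rightarrow> bool" where
  "directed_in A D \<longleftrightarrow> D \<subseteq> A \<and>
     (\<forall>F. finite F \<and> F \<subseteq> D \<longrightarrow> (\<exists>u\<in>D. \<forall>x\<in>F. x \<le> u))"

definition is_sup_in :: "'a::order set \<Rightarrow> 'a set \<Rightarrow> 'a \<Rightarrow> bool" where
  "is_sup_in A D s \<longleftrightarrow> s \<in> A \<and> (\<forall>d\<in>D. d \<le> s) \<and>
     (\<forall>u\<in>A. (\<forall>d\<in>D. d \<le> u) \<longrightarrow> s \<le> u)"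

definition dcpo_on :: "'a::order set \<Rightarrow> bool" where
  "dcpo_on A \<longleftrightarrow> (\<forall>D. directed_in A D \<longrightarrow> (\<exists>s. is_sup_in A D s))"

definition mcp :: "'a::order set \<Rightarrow> 'b::order set \<Rightarrow> ('a \<Rightarrow> 'b) \<Rightarrow> bool" where
  "mcp A B T \<longleftrightarrow> T ` A \<subseteq> B \<and>
     (\<forall>D s. directed_in A D \<and> is_sup_in A D s \<longrightarrow> is_sup_in B (T ` D) (T s))"

text \<open>Directed completion (iota : X -> Yc), universal w.r.t. all dcpos living in type 'z.\<close>
definition directed_completion ::
  "'x::order set \<Rightarrow> 'y::order set \<Rightarrow> ('x \<Rightarrow> 'y) \<Rightarrow> 'z::order itself \<Rightarrow> bool" where
  "directed_completion X Yc \<iota> (_::'z itself) \<longleftrightarrow>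
     dcpo_on Yc \<and> mcp X Yc \<iota> \<and>
     (\<forall>(Zc::'z set) T. dcpo_on Zc \<and> mcp X Zc T \<longrightarrow>
        (\<exists>Tb. mcp Yc Zc Tb \<and> (\<forall>x\<in>X. Tb (\<iota> x) = T x) \<and>
           (\<forall>Tb'. mcp Yc Zc Tb' \<and> (\<forall>x\<in>X. Tb' (\<iota> x) = T x) \<longrightarrow>
              (\<forall>y\<in>Yc. Tb' y = Tb y))))"

text \<open>Notions inside the ambient poset Y = UNIV.\<close>

definition lower_set :: "'a::order set \<Rightarrow> bool" where
  "lower_set A \<longleftrightarrow> (\<forall>x y. x \<in> A \<and> y \<le> x \<longrightarrow> y \<in> A)"

definition down :: "'a::order set \<Rightarrow> 'a set" where
  "down A = {x. \<exists>a\<in>A. x \<le> a}"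

definition dsup_closed :: "'a::order set \<Rightarrow> bool" where
  "dsup_closed A \<longleftrightarrow> (\<forall>D s. directed_in UNIV D \<and> D \<subseteq> A \<and> is_sup_in UNIV D s \<longrightarrow> s \<in> A)"

definition dclosure :: "'a::order set \<Rightarrow> 'a set" where
  "dclosure A = \<Inter>{B. A \<subseteq> B \<and> dsup_closed B}"

definition lclosure :: "'a::order set \<Rightarrow> 'a set" where
  "lclosure A = \<Inter>{B. A \<subseteq> B \<and> lower_set B \<and> dsup_closed B}"

definition dense :: "'a::order set \<Rightarrow> bool" where
  "dense A \<longleftrightarrow> dclosure A = UNIV"

definition is_tip :: "'a::order set \<Rightarrow> 'a \<Rightarrow> bool" where
  "is_tip B m \<longleftrightarrow> m \<in> dclosure B \<and> (\<forall>y\<in>dclosure B. y \<le> m)"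

definition truncates :: "'a::order \<Rightarrow> bool" where
  "truncates a \<longleftrightarrow> (\<forall>B m. is_tip B m \<and> a \<le> m \<longrightarrow> a \<in> lclosure (down B \<inter> down {a}))"

definition directly_truncates :: "'a::order \<Rightarrow> bool" where
  "directly_truncates a \<longleftrightarrow>
     (\<forall>B s. directed_in UNIV B \<and> is_sup_in UNIV B s \<and> a \<le> s \<longrightarrow>
        a \<in> lclosure (down B \<inter> down {a}))"

end

theory Submission
  imports Defs
begin

text \<open>Every map T with the Mcp from X to a dcpo Z extends to Y by sending y to the
  supremum of T over the elements of X below y. This supremum exists for every y because
  the set of such y contains X and is closed under directed suprema, and X is dense: for a
  directed E with supremum y, the candidate value is the supremum M of the extended map over E,
  and direct truncation shows that every x \<le> y in X lies in the lower, directed-sup-closed set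
  generated by elements below both x and some e \<in> E, all of which T maps below M. Uniqueness
  of the extension follows from density alone. Since a directed set with a supremum has that
  supremum as its tip, truncation implies direct truncation, so both parts of the theorem follow.\<close>

lemma is_sup_in_unique: "is_sup_in A D s \<Longrightarrow> is_sup_in A D t \<Longrightarrow> s = t"
  unfolding is_sup_in_def by (meson order.antisym)

lemma down_singleton [simp]: "down {y} = {x. x \<le> y}"
  by (auto simp: down_def)

lemma lclosure_least: "lower_set S \<Longrightarrow> dsup_closed S \<Longrightarrow> A \<subseteq> S \<Longrightarrow> lclosure A \<subseteq> S"
  unfolding lclosure_def by blast

lemma dclosure_least: "dsup_closed S \<Longrightarrow> A \<subseteq> S \<Longrightarrow> dclosure A \<subseteq> S"
  unfolding dclosure_def by blast

lemma dense_induct: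
  assumes "dense X" "X \<subseteq> S" "dsup_closed S"
  shows "y \<in> S"
  using assms dclosure_least unfolding dense_def by blast

lemma directed_in_image:
  assumes "directed_in A D" "mono_on D f" "f ` D \<subseteq> B"
  shows "directed_in B (f ` D)"
  unfolding directed_in_def
proof (intro conjI allI impI)
  show "f ` D \<subseteq> B" by fact
  fix G assume "finite G \<and> G \<subseteq> f ` D"
  then obtain G' where G': "G' \<subseteq> D" "finite G'" "G = f ` G'"
    by (meson finite_subset_image)
  then obtain u where u: "u \<in> D" "\<forall>x\<in>G'. x \<le> u"
    using assms(1) unfolding directed_in_def by blast
  with G' assms(2) have "\<forall>x\<in>G. x \<le> f u" by (auto simp: mono_on_def)
  with u(1) show "\<exists>u\<in>f ` D. \<forall>x\<in>G. x \<le> u" by blast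
qed

lemma mcp_mono:
  assumes "mcp X Z T" "x \<in> X" "y \<in> X" "x \<le> y"
  shows "T x \<le> T y"
proof -
  have "directed_in X {x, y}" "is_sup_in X {x, y} y"
    using assms unfolding directed_in_def is_sup_in_def by auto
  then have "is_sup_in Z (T ` {x, y}) (T y)"
    using assms(1) unfolding mcp_def by blast
  then show ?thesis unfolding is_sup_in_def by auto
qed

lemma mcp_id_lower_set:
  assumes "dcpo_on (UNIV :: 'a::order set)" "lower_set X"
  shows "mcp X (UNIV :: 'a set) id"
  unfolding mcp_def
proof (intro conjI allI impI)
  fix D s assume D: "directed_in X D \<and> is_sup_in X D s"
  then have "directed_in UNIV D" unfolding directed_in_def by auto
  then obtain t where t: "is_sup_in UNIV D t" using assms(1) unfolding dcpo_on_def by blast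
  have "s \<in> X" "t \<le> s" using t D unfolding is_sup_in_def by auto
  then have "t \<in> X" using assms(2) unfolding lower_set_def by blast
  then have "s = t" using t D \<open>t \<le> s\<close> unfolding is_sup_in_def by (simp add: order.antisym)
  then show "is_sup_in UNIV (id ` D) (id s)" using t by simp
qed simp

lemma mcp_eq_on_dense:
  assumes "dense X" "mcp (UNIV :: 'a::order set) Z G1" "mcp UNIV Z G2" "\<forall>x\<in>X. G1 x = G2 x"
  shows "G1 y = G2 y"
proof -
  have "dsup_closed {y. G1 y = G2 y}" unfolding dsup_closed_def
  proof (intro allI impI, elim conjE)
    fix D s assume "directed_in UNIV D" "D \<subseteq> {y. G1 y = G2 y}" "is_sup_in UNIV D s"
    then have "is_sup_in Z (G1 ` D) (G1 s)" "is_sup_in Z (G2 ` D) (G2 s)" "G1 ` D = G2 ` D"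
      using assms(2,3) unfolding mcp_def by (auto intro!: image_cong)
    then show "s \<in> {y. G1 y = G2 y}" using is_sup_in_unique by fastforce
  qed
  with assms(1,4) show ?thesis using dense_induct[of X "{y. G1 y = G2 y}"] by blast
qed

lemma is_tip_sup:
  assumes "directed_in UNIV E" "is_sup_in UNIV E y"
  shows "is_tip E y"
proof -
  have "dsup_closed {x. x \<le> y}" unfolding dsup_closed_def is_sup_in_def by auto
  moreover have "E \<subseteq> {x. x \<le> y}" using assms(2) unfolding is_sup_in_def by auto
  ultimately have "dclosure E \<subseteq> {x. x \<le> y}" by (rule dclosure_least)
  moreover have "y \<in> dclosure E" unfolding dclosure_def dsup_closed_def using assms by blast
  ultimately show ?thesis unfolding is_tip_def by auto
qed

lemma truncates_imp_directly_truncates: "truncates a \<Longrightarrow> directly_truncates a"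
  unfolding truncates_def directly_truncates_def using is_tip_sup by blast

locale dense_extension =
  fixes X :: "'a::order set" and Z :: "'z::order set" and T :: "'a \<Rightarrow> 'z"
  assumes lower: "lower_set X" and dense: "dense X"
    and directly_truncating: "\<forall>a\<in>X. directly_truncates a"
    and dcpo: "dcpo_on Z" and mcp: "mcp X Z T"
begin

abbreviation below :: "'a \<Rightarrow> 'z set" where
  "below y \<equiv> T ` (X \<inter> {x. x \<le> y})"

definition has_ext :: "'a \<Rightarrow> bool" where
  "has_ext y \<longleftrightarrow> (\<exists>s. is_sup_in Z (below y) s)"

definition ext :: "'a \<Rightarrow> 'z" where
  "ext y = (SOME s. is_sup_in Z (below y) s)"

lemma ext_is_sup: "has_ext y \<Longrightarrow> is_sup_in Z (below y) (ext y)"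
  unfolding has_ext_def ext_def by (rule someI_ex)

lemma lower_setD: "x \<in> X \<Longrightarrow> z \<le> x \<Longrightarrow> z \<in> X"
  using lower unfolding lower_set_def by blast

lemma is_sup_below: "x \<in> X \<Longrightarrow> is_sup_in Z (below x) (T x)"
  using mcp mcp_mono[OF mcp] unfolding is_sup_in_def mcp_def by auto

lemma ext_mono:
  assumes "has_ext e" "has_ext u" "e \<le> u"
  shows "ext e \<le> ext u"
proof -
  have "ext u \<in> Z" "\<forall>d\<in>below e. d \<le> ext u"
    using ext_is_sup[OF assms(2)] assms(3) unfolding is_sup_in_def by (auto intro: order_trans)
  then show ?thesis using ext_is_sup[OF assms(1)] unfolding is_sup_in_def by blast
qed

lemma T_le_bound:
  assumes E: "directed_in UNIV E" "is_sup_in UNIV E y" "\<forall>e\<in>E. has_ext e"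
    and M: "M \<in> Z" "\<forall>e\<in>E. ext e \<le> M"
    and x: "x \<in> X" "x \<le> y"
  shows "T x \<le> M"
proof -
  define S where "S = {z. z \<le> x \<and> T z \<le> M}"
  have "lower_set S" unfolding lower_set_def S_def
  proof (intro allI impI, clarify)
    fix z w assume "z \<le> x" "T z \<le> M" "w \<le> z"
    then show "w \<le> x \<and> T w \<le> M"
      using mcp_mono[OF mcp, of w z] lower_setD[OF x(1)] by (meson order_trans)
  qed
  moreover have "dsup_closed S" unfolding dsup_closed_def
  proof (intro allI impI, elim conjE)
    fix D s assume D: "directed_in UNIV D" "D \<subseteq> S" "is_sup_in UNIV D s"
    then have "s \<le> x" unfolding is_sup_in_def S_def by auto
    have "D \<subseteq> X" using D(2) lower_setD[OF x(1)] unfolding S_def by auto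
    then have "directed_in X D" "is_sup_in X D s"
      using D lower_setD[OF x(1) \<open>s \<le> x\<close>] unfolding directed_in_def is_sup_in_def by auto
    then have "is_sup_in Z (T ` D) (T s)" using mcp unfolding mcp_def by blast
    then have "T s \<le> M" using D(2) M(1) unfolding is_sup_in_def S_def by auto
    then show "s \<in> S" using \<open>s \<le> x\<close> unfolding S_def by auto
  qed
  moreover have "down E \<inter> down {x} \<subseteq> S"
  proof
    fix z assume "z \<in> down E \<inter> down {x}"
    then obtain e where e: "e \<in> E" "z \<le> e" "z \<le> x" unfolding down_def by auto
    then have "T z \<le> ext e"
      using ext_is_sup[of e] E(3) lower_setD[OF x(1)] unfolding is_sup_in_def by auto
    also have "ext e \<le> M" using M e by auto
    finally show "z \<in> S" using e unfolding S_def by auto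
  qed
  ultimately have "lclosure (down E \<inter> down {x}) \<subseteq> S" by (rule lclosure_least)
  moreover have "x \<in> lclosure (down E \<inter> down {x})"
    using directly_truncating x E unfolding directly_truncates_def by blast
  ultimately show ?thesis unfolding S_def by auto
qed

lemma is_sup_ext_directed:
  assumes E: "directed_in UNIV E" "is_sup_in UNIV E y" "\<forall>e\<in>E. has_ext e"
  shows "\<exists>M. is_sup_in Z (ext ` E) M \<and> is_sup_in Z (below y) M"
proof -
  have "mono_on E ext" using E(3) ext_mono by (auto intro: mono_onI)
  moreover have "ext ` E \<subseteq> Z" using ext_is_sup E(3) unfolding is_sup_in_def by auto
  ultimately have "directed_in Z (ext ` E)" by (rule directed_in_image[OF E(1)])
  then obtain M where M: "is_sup_in Z (ext ` E) M" using dcpo unfolding dcpo_on_def by blast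
  have "M \<le> u" if u: "u \<in> Z" "\<forall>d\<in>below y. d \<le> u" for u
  proof -
    have "ext e \<le> u" if "e \<in> E" for e
    proof -
      have "e \<le> y" using E(2) that unfolding is_sup_in_def by auto
      then show ?thesis using ext_is_sup[of e] E(3) that u unfolding is_sup_in_def
        by (auto intro: order_trans)
    qed
    then show ?thesis using M u(1) unfolding is_sup_in_def by blast
  qed
  moreover have "M \<in> Z" "\<forall>e\<in>E. ext e \<le> M" using M unfolding is_sup_in_def by auto
  ultimately have "is_sup_in Z (below y) M"
    using T_le_bound[OF E] unfolding is_sup_in_def by blast
  with M show ?thesis by blast
qed

lemma has_ext_everywhere: "has_ext y"
proof (rule dense_induct[OF dense, of "{y. has_ext y}", simplified])
  show "X \<subseteq> {y. has_ext y}" using is_sup_below unfolding has_ext_def by blast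
  show "dsup_closed {y. has_ext y}" unfolding dsup_closed_def
  proof (intro allI impI, elim conjE)
    fix D s assume "directed_in UNIV D" "D \<subseteq> {y. has_ext y}" "is_sup_in UNIV D s"
    then show "s \<in> {y. has_ext y}" using is_sup_ext_directed[of D s] unfolding has_ext_def by auto
  qed
qed

lemma mcp_ext: "mcp UNIV Z ext"
  unfolding mcp_def
proof (intro conjI allI impI)
  show "ext ` UNIV \<subseteq> Z" using ext_is_sup[OF has_ext_everywhere] unfolding is_sup_in_def by auto
  fix D :: "'a set" and s assume "directed_in UNIV D \<and> is_sup_in UNIV D s"
  then obtain M where M: "is_sup_in Z (ext ` D) M" "is_sup_in Z (below s) M"
    using is_sup_ext_directed has_ext_everywhere by blast
  have "M = ext s" using is_sup_in_unique[OF M(2) ext_is_sup[OF has_ext_everywhere]] .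
  then show "is_sup_in Z (ext ` D) (ext s)" using M(1) by simp
qed

lemma ext_extends: "x \<in> X \<Longrightarrow> ext x = T x"
  using is_sup_in_unique[OF ext_is_sup[OF has_ext_everywhere] is_sup_below] .

end

lemma directed_completion_if_directly_truncates:
  fixes X :: "'a::order set"
  assumes "dcpo_on (UNIV :: 'a set)" "lower_set X" "dense X" "\<forall>a\<in>X. directly_truncates a"
  shows "directed_completion X (UNIV :: 'a set) id TYPE('z::order)"
  unfolding directed_completion_def
proof (intro conjI allI impI)
  show "mcp X UNIV id" using assms(1,2) by (rule mcp_id_lower_set)
  fix Z :: "'z set" and T assume "dcpo_on Z \<and> mcp X Z T"
  then interpret dense_extension X Z T
    using assms by unfold_locales simp_all
  show "\<exists>Tb. mcp UNIV Z Tb \<and> (\<forall>x\<in>X. Tb (id x) = T x) \<and>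
           (\<forall>Tb'. mcp UNIV Z Tb' \<and> (\<forall>x\<in>X. Tb' (id x) = T x) \<longrightarrow> (\<forall>y\<in>UNIV. Tb' y = Tb y))"
  proof (intro exI[of _ ext] conjI allI impI ballI)
    fix G y assume "mcp UNIV Z G \<and> (\<forall>x\<in>X. G (id x) = T x)"
    then show "G y = ext y" using mcp_eq_on_dense[OF dense _ mcp_ext, of G] ext_extends by simp
  qed (simp_all add: mcp_ext ext_extends)
qed fact

theorem mainTheorem6:
  fixes X :: "'a::order set"
  assumes "dcpo_on (UNIV :: 'a set)"
    and "lower_set X"
    and "dense X"
  shows "((\<forall>a\<in>X. truncates a) \<longrightarrow> directed_completion X (UNIV :: 'a set) id TYPE('z::order))
       \<and> (((\<forall>x\<in>X. \<forall>y\<in>X. \<exists>s. is_sup_in X {x, y} s) \<and> (\<forall>a\<in>X. directly_truncates a))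
            \<longrightarrow> directed_completion X (UNIV :: 'a set) id TYPE('z::order))"
  using directed_completion_if_directly_truncates[OF assms] truncates_imp_directly_truncates
  by (meson ballI)

end
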